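(* Let $(S,\to)$ be a labelled transition system, $\mathcal{C}$ a consistent colouring and $s\in S$. Then a sequence $\sigma$ is a complete $\mathcal{C}$-coloured trace of $s$ if and only if $\sigma$ is a $\mathcal{C}$-coloured trace of $s$ that is infinite, or is a divergent $\mathcal{C}$-coloured trace of $s$, or is maximal in the sense that it is not a proper prefix of any $\mathcal{C}$-coloured trace of $s$.
   Context: Fix a set $\mathrm{Act}$ of actions containing a special action $\tau$. An LTS is $(S,\to)$ with $\to\subseteq S\times\mathrm{Act}\times S$. A path from $s$ is an alternating sequence $s_0,a_1,s_1,a_2,\dots$ (ending with a state if finite) with $s_0=s$ and $s_{k-1}\xrightarrow{a_k}s_k$; it is maximal if infinite or if its last state has no outgoing transitions. A colouring is a function $\mathcal{C}$ from $S$ into an arbitrary set of colours. For a path $\pi$, $\mathcal{C}(\pi)$ is obtained from $\mathcal{C}(s_0),a_1,\mathcal{C}(s_1),a_2,\dots$ by contracting every finite maximal consecutive subsequence $C,\tau,C,\tau,\dots,\tau,C$ and every infinite one $C,\tau,C,\tau,\dots$ to $C$. For $\pi$ a path from $s$, $\mathcal{C}(\pi)$ is a $\mathcal{C}$-coloured trace of $s$; it is a complete $\mathcal{C}$-coloured trace of $s$ if $\pi$ is maximal, and a divergent $\mathcal{C}$-coloured trace of $s$ if $\pi$ is infinite and $\mathcal{C}(\pi)$ is finite. $\mathcal{C}$ is consistent if any two states of equal colour have the same $\mathcal{C}$-coloured traces. *)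

theory Defs
  imports Main
begin

(* A (possibly infinite) sequence x0, b1, b2, ... is represented by its head x0 together
   with a function  nat => 'b option  giving the remaining items; the sequence is finite
   iff some entry is None, and Nones form a suffix (wf_seq). *)

definition wf_seq :: "(nat \<Rightarrow> 'b option) \<Rightarrow> bool" where
  "wf_seq f \<longleftrightarrow> (\<forall>n. f n = None \<longrightarrow> f (Suc n) = None)"

definition finite_seq :: "(nat \<Rightarrow> 'b option) \<Rightarrow> bool" where
  "finite_seq f \<longleftrightarrow> (\<exists>n. f n = None)"

(* A path s0, a1, s1, a2, s2, ... is given by s0 and f with f n = Some (a_{n+1}, s_{n+1}). *)
fun state_at :: "'s \<Rightarrow> (nat \<Rightarrow> ('a \<times> 's) option) \<Rightarrow> nat \<Rightarrow> 's" where
  "state_at s0 f 0 = s0"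
| "state_at s0 f (Suc n) = snd (the (f n))"

definition is_path :: "('s \<times> 'a \<times> 's) set \<Rightarrow> 's \<Rightarrow> (nat \<Rightarrow> ('a \<times> 's) option) \<Rightarrow> bool" where
  "is_path T s0 f \<longleftrightarrow> wf_seq f \<and>
     (\<forall>n a t. f n = Some (a, t) \<longrightarrow> (state_at s0 f n, a, t) \<in> T)"

definition is_maximal_path :: "('s \<times> 'a \<times> 's) set \<Rightarrow> 's \<Rightarrow> (nat \<Rightarrow> ('a \<times> 's) option) \<Rightarrow> bool" where
  "is_maximal_path T s0 f \<longleftrightarrow> is_path T s0 f \<and>
     (\<not> finite_seq f \<or>
      (\<exists>n. f n = None \<and> (\<forall>m<n. f m \<noteq> None) \<and> (\<forall>a t. (state_at s0 f n, a, t) \<notin> T)))"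

definition kept :: "('s \<Rightarrow> 'c) \<Rightarrow> 'a \<Rightarrow> 's \<Rightarrow> (nat \<Rightarrow> ('a \<times> 's) option) \<Rightarrow> nat \<Rightarrow> bool" where
  "kept C tau s0 f n \<longleftrightarrow>
     (\<exists>a t. f n = Some (a, t) \<and> \<not> (a = tau \<and> C t = C (state_at s0 f n)))"

(* the coloured trace C(pi) of the path pi = (s0, f): contract every maximal block C,tau,C,...,tau,C
   (finite or infinite) to C, i.e. keep exactly the kept steps, in order *)
definition ctrace :: "('s \<Rightarrow> 'c) \<Rightarrow> 'a \<Rightarrow> 's \<Rightarrow> (nat \<Rightarrow> ('a \<times> 's) option)
    \<Rightarrow> 'c \<times> (nat \<Rightarrow> ('a \<times> 'c) option)" where
  "ctrace C tau s0 f =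
     (C s0, (\<lambda>k. if (\<exists>n. kept C tau s0 f n \<and> card {m. m < n \<and> kept C tau s0 f m} = k)
                 then map_option (\<lambda>(a, t). (a, C t))
                        (f (THE n. kept C tau s0 f n \<and> card {m. m < n \<and> kept C tau s0 f m} = k))
                 else None))"

definition coloured_traces :: "('s \<times> 'a \<times> 's) set \<Rightarrow> ('s \<Rightarrow> 'c) \<Rightarrow> 'a \<Rightarrow> 's
    \<Rightarrow> ('c \<times> (nat \<Rightarrow> ('a \<times> 'c) option)) set" where
  "coloured_traces T C tau s = {ctrace C tau s f | f. is_path T s f}"

definition complete_coloured_traces :: "('s \<times> 'a \<times> 's) set \<Rightarrow> ('s \<Rightarrow> 'c) \<Rightarrow> 'a \<Rightarrow> 's
    \<Rightarrow> ('c \<times> (nat \<Rightarrow> ('a \<times> 'c) option)) set" where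
  "complete_coloured_traces T C tau s = {ctrace C tau s f | f. is_maximal_path T s f}"

definition divergent_coloured_traces :: "('s \<times> 'a \<times> 's) set \<Rightarrow> ('s \<Rightarrow> 'c) \<Rightarrow> 'a \<Rightarrow> 's
    \<Rightarrow> ('c \<times> (nat \<Rightarrow> ('a \<times> 'c) option)) set" where
  "divergent_coloured_traces T C tau s =
     {ctrace C tau s f | f. is_path T s f \<and> \<not> finite_seq f \<and> finite_seq (snd (ctrace C tau s f))}"

definition consistent_colouring :: "('s \<times> 'a \<times> 's) set \<Rightarrow> ('s \<Rightarrow> 'c) \<Rightarrow> 'a \<Rightarrow> bool" where
  "consistent_colouring T C tau \<longleftrightarrow>
     (\<forall>t u. C t = C u \<longrightarrow> coloured_traces T C tau t = coloured_traces T C tau u)"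

definition proper_prefix :: "'c \<times> (nat \<Rightarrow> 'b option) \<Rightarrow> 'c \<times> (nat \<Rightarrow> 'b option) \<Rightarrow> bool" where
  "proper_prefix \<sigma> \<rho> \<longleftrightarrow> fst \<sigma> = fst \<rho> \<and> (\<forall>n. snd \<sigma> n \<noteq> None \<longrightarrow> snd \<sigma> n = snd \<rho> n) \<and> \<sigma> \<noteq> \<rho>"

end

theory Submission
  imports Defs
begin

text \<open>
  Items of a coloured trace correspond to the kept steps of the path, the k-th item to the kept
  step with exactly k kept steps before it; cutting a path therefore cuts its trace to a prefix,
  properly so iff a kept step is cut off.

  A maximal path that is infinite gives an infinite or a divergent trace. If it ends in a deadlock u,
  any proper extension \<rho> of its trace comes from a path g whose next kept step starts in a state
  coloured like u (both carry the colour of the last item they share); by consistency that state and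
  u have the same traces, but the suffix of g there has a non-empty trace while u has none.
  Conversely, a finite path whose trace has no proper extension can be continued from its end by
  arbitrary transitions until a deadlock (or forever): none of the added steps can be kept, so the
  resulting maximal path has the same trace.
\<close>

abbreviation rank :: "(nat \<Rightarrow> bool) \<Rightarrow> nat \<Rightarrow> nat" where
  "rank P n \<equiv> card {m. m < n \<and> P m}"

lemma rank_Suc: "rank P (Suc n) = (if P n then Suc (rank P n) else rank P n)"
proof -
  have "{m. m < Suc n \<and> P m} = (if P n then insert n {m. m < n \<and> P m} else {m. m < n \<and> P m})"
    by (auto simp: less_Suc_eq)
  then show ?thesis by simp
qed

lemma rank_strict_mono: "P m \<Longrightarrow> m < n \<Longrightarrow> rank P m < rank P n"
  by (rule psubset_card_mono) auto

lemma rank_inj: "P m \<Longrightarrow> P n \<Longrightarrow> rank P m = rank P n \<Longrightarrow> m = n"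
  using rank_strict_mono[of P m n] rank_strict_mono[of P n m] by (metis less_irrefl nat_neq_iff)

lemma rank_attained: "k < rank P n \<Longrightarrow> \<exists>m<n. P m \<and> rank P m = k"
proof (induction n)
  case (Suc n)
  show ?case
  proof (cases "k < rank P n")
    case True
    then show ?thesis using Suc.IH less_SucI by blast
  next
    case False
    then have "P n" "rank P n = k" using Suc.prems by (auto simp: rank_Suc split: if_splits)
    then show ?thesis by blast
  qed
qed simp

lemma wf_seq_None_mono:
  assumes "wf_seq f" "f n = None" "n \<le> m"
  shows "f m = None"
  using assms(3) by (induction m rule: dec_induct) (use assms in \<open>auto simp: wf_seq_def\<close>)

lemma wf_seq_Some_before: "wf_seq f \<Longrightarrow> f q \<noteq> None \<Longrightarrow> m < q \<Longrightarrow> f m \<noteq> None"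
  using wf_seq_None_mono[of f m q] by (auto simp del: not_None_eq)

lemma finite_seq_first_None: "finite_seq f \<Longrightarrow> \<exists>n. f n = None \<and> (\<forall>m<n. f m \<noteq> None)"
  unfolding finite_seq_def using exists_least_iff[of "\<lambda>n. f n = None"] by blast

lemma kept_Some: "kept C tau s f n \<Longrightarrow> f n \<noteq> None"
  unfolding kept_def by auto

lemma fst_ctrace [simp]: "fst (ctrace C tau s f) = C s"
  by (simp add: ctrace_def)

lemma ctrace_at_rank:
  assumes "kept C tau s f n"
  shows "snd (ctrace C tau s f) (rank (kept C tau s f) n) = map_option (\<lambda>(a, t). (a, C t)) (f n)"
proof -
  let ?K = "kept C tau s f"
  have "(THE n'. ?K n' \<and> rank ?K n' = rank ?K n) = n"
    using assms rank_inj[of ?K _ n] by blast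
  with assms show ?thesis by (auto simp: ctrace_def)
qed

lemma ctrace_defined_iff:
  "snd (ctrace C tau s f) k \<noteq> None \<longleftrightarrow> (\<exists>n. kept C tau s f n \<and> rank (kept C tau s f) n = k)"
proof
  assume "snd (ctrace C tau s f) k \<noteq> None"
  then show "\<exists>n. kept C tau s f n \<and> rank (kept C tau s f) n = k"
    by (auto simp: ctrace_def split: if_splits)
next
  assume "\<exists>n. kept C tau s f n \<and> rank (kept C tau s f) n = k"
  then show "snd (ctrace C tau s f) k \<noteq> None"
    using ctrace_at_rank kept_Some by fastforce
qed

lemma ctrace_cong:
  assumes "\<And>m. kept C tau s f m \<longleftrightarrow> kept C tau s g m" and "\<And>m. kept C tau s f m \<Longrightarrow> f m = g m"
  shows "ctrace C tau s f = ctrace C tau s g"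
proof -
  have kept_eq: "kept C tau s f = kept C tau s g" using assms(1) by blast
  have "snd (ctrace C tau s f) k = snd (ctrace C tau s g) k" for k
  proof (cases "\<exists>n. kept C tau s f n \<and> rank (kept C tau s f) n = k")
    case True
    then obtain n where "kept C tau s f n" "rank (kept C tau s f) n = k" by blast
    then show ?thesis
      using ctrace_at_rank[of C tau s f n] ctrace_at_rank[of C tau s g n] assms by auto
  next
    case False
    then have "snd (ctrace C tau s f) k = None" "snd (ctrace C tau s g) k = None"
      using ctrace_defined_iff[of C tau s f k] ctrace_defined_iff[of C tau s g k]
      unfolding kept_eq by blast+
    then show ?thesis by simp
  qed
  then show ?thesis by (simp add: ctrace_def)
qed

definition truncate_seq :: "nat \<Rightarrow> (nat \<Rightarrow> 'b option) \<Rightarrow> nat \<Rightarrow> 'b option" where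
  "truncate_seq N f m = (if m < N then f m else None)"

lemma state_at_cong: "(\<And>m. m < M \<Longrightarrow> f m = g m) \<Longrightarrow> state_at s f M = state_at s g M"
  by (cases M) auto

lemma state_at_truncate: "M \<le> N \<Longrightarrow> state_at s (truncate_seq N f) M = state_at s f M"
  by (rule state_at_cong) (simp add: truncate_seq_def)

lemma kept_truncate: "kept C tau s (truncate_seq N f) m \<longleftrightarrow> m < N \<and> kept C tau s f m"
  by (cases "m < N") (auto simp: kept_def state_at_truncate truncate_seq_def)

lemma truncate_truncate: "n \<le> N \<Longrightarrow> truncate_seq n (truncate_seq N f) = truncate_seq n f"
  by (auto simp: truncate_seq_def)

lemma truncate_beyond_None: "wf_seq f \<Longrightarrow> f n = None \<Longrightarrow> truncate_seq n f = f"
  using wf_seq_None_mono[of f n] by (auto simp: truncate_seq_def)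

lemma is_path_truncate: "is_path T s f \<Longrightarrow> is_path T s (truncate_seq N f)"
  unfolding is_path_def wf_seq_def
  by (auto simp: state_at_truncate truncate_seq_def split: if_splits)

lemma ctrace_truncate:
  "(\<And>m. N \<le> m \<Longrightarrow> \<not> kept C tau s f m) \<Longrightarrow> ctrace C tau s (truncate_seq N f) = ctrace C tau s f"
  by (rule ctrace_cong) (use leI in \<open>auto simp: kept_truncate truncate_seq_def\<close>)

lemma rank_kept_truncate:
  "n \<le> N \<Longrightarrow> rank (kept C tau s (truncate_seq N f)) n = rank (kept C tau s f) n"
  by (simp add: kept_truncate) (metis less_le_trans)

lemma ctrace_truncate_prefix:
  assumes "snd (ctrace C tau s (truncate_seq N f)) k \<noteq> None"
  shows "snd (ctrace C tau s (truncate_seq N f)) k = snd (ctrace C tau s f) k"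
proof -
  obtain n where n: "kept C tau s (truncate_seq N f) n" "rank (kept C tau s (truncate_seq N f)) n = k"
    using assms unfolding ctrace_defined_iff by blast
  then have "n < N" "kept C tau s f n" by (auto simp: kept_truncate)
  then show ?thesis
    using n ctrace_at_rank[OF n(1)] ctrace_at_rank[of C tau s f n] rank_kept_truncate[of n N C tau s f]
    by (simp add: truncate_seq_def)
qed

lemma ctrace_truncate_proper_prefix:
  assumes "kept C tau s f m" "N \<le> m"
  shows "proper_prefix (ctrace C tau s (truncate_seq N f)) (ctrace C tau s f)"
proof -
  have "snd (ctrace C tau s (truncate_seq N f)) (rank (kept C tau s f) m) = None"
  proof (rule ccontr)
    assume "\<not> ?thesis"
    then obtain n where n: "kept C tau s (truncate_seq N f) n"
        "rank (kept C tau s (truncate_seq N f)) n = rank (kept C tau s f) m"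
      unfolding ctrace_defined_iff by blast
    then have "n < m" "kept C tau s f n" "rank (kept C tau s f) n = rank (kept C tau s f) m"
      using assms(2) rank_kept_truncate[of n N C tau s f] by (auto simp: kept_truncate)
    then show False using rank_inj[of "kept C tau s f" n m] assms(1) by simp
  qed
  moreover have "snd (ctrace C tau s f) (rank (kept C tau s f) m) \<noteq> None"
    using assms(1) unfolding ctrace_defined_iff by blast
  ultimately have "ctrace C tau s (truncate_seq N f) \<noteq> ctrace C tau s f" by metis
  then show ?thesis
    unfolding proper_prefix_def using ctrace_truncate_prefix[of C tau s N f] by auto
qed

lemma ctrace_defined_iff_below_end:
  assumes "wf_seq f" "f n = None"
  shows "snd (ctrace C tau s f) j \<noteq> None \<longleftrightarrow> j < rank (kept C tau s f) n"
proof
  assume "snd (ctrace C tau s f) j \<noteq> None"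
  then obtain m where m: "kept C tau s f m" "rank (kept C tau s f) m = j"
    unfolding ctrace_defined_iff by blast
  have "m < n"
  proof (rule ccontr)
    assume "\<not> m < n"
    then show False using kept_Some[OF m(1)] wf_seq_None_mono[OF assms, of m] by simp
  qed
  then show "j < rank (kept C tau s f) n" using m rank_strict_mono by metis
next
  assume "j < rank (kept C tau s f) n"
  then obtain m where "kept C tau s f m" "rank (kept C tau s f) m = j"
    using rank_attained by blast
  then show "snd (ctrace C tau s f) j \<noteq> None" unfolding ctrace_defined_iff by blast
qed

lemma finite_seq_ctrace:
  assumes "is_path T s f" "finite_seq f"
  shows "finite_seq (snd (ctrace C tau s f))"
proof -
  obtain n where "f n = None" using assms(2) unfolding finite_seq_def by blast
  then have "snd (ctrace C tau s f) (rank (kept C tau s f) n) = None"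
    using ctrace_defined_iff_below_end[of f n] assms(1) unfolding is_path_def by blast
  then show ?thesis unfolding finite_seq_def by blast
qed

definition last_colour :: "'c \<times> (nat \<Rightarrow> ('a \<times> 'c) option) \<Rightarrow> nat \<Rightarrow> 'c" where
  "last_colour \<sigma> k = (if k = 0 then fst \<sigma> else snd (the (snd \<sigma> (k - 1))))"

lemma colour_state_at:
  assumes "\<forall>m<M. f m \<noteq> None"
  shows "C (state_at s f M) = last_colour (ctrace C tau s f) (rank (kept C tau s f) M)"
  using assms
proof (induction M)
  case (Suc M)
  have "f M \<noteq> None" using Suc.prems by simp
  then obtain a t where step: "f M = Some (a, t)" by auto
  show ?case
  proof (cases "kept C tau s f M")
    case True
    then show ?thesis using ctrace_at_rank[OF True] step by (simp add: rank_Suc last_colour_def)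
  next
    case False
    then have "C t = C (state_at s f M)" using step by (simp add: kept_def)
    with False Suc show ?thesis using step by (simp add: rank_Suc)
  qed
qed (simp add: last_colour_def)

lemma state_at_suffix: "state_at (state_at s f q) (\<lambda>m. f (q + m)) m = state_at s f (q + m)"
  by (cases m) auto

lemma is_path_suffix: "is_path T s f \<Longrightarrow> is_path T (state_at s f q) (\<lambda>m. f (q + m))"
  unfolding is_path_def wf_seq_def by (auto simp: state_at_suffix)

lemma coloured_traces_deadlock:
  assumes "\<forall>a t. (u, a, t) \<notin> T" "\<rho> \<in> coloured_traces T C tau u"
  shows "snd \<rho> 0 = None"
proof -
  obtain h where h: "\<rho> = ctrace C tau u h" "is_path T u h"
    using assms(2) unfolding coloured_traces_def by blast
  have "h 0 = None"
  proof (rule ccontr)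
    assume "h 0 \<noteq> None"
    then obtain a t where "h 0 = Some (a, t)" by auto
    then have "(u, a, t) \<in> T" using h(2) unfolding is_path_def by (metis state_at.simps(1))
    then show False using assms(1) by blast
  qed
  then have "h m = None" for m using h(2) wf_seq_None_mono[of h 0 m] unfolding is_path_def by simp
  then have "\<not> kept C tau u h m" for m by (simp add: kept_def)
  then have "\<not> snd (ctrace C tau u h) 0 \<noteq> None" using ctrace_defined_iff[of C tau u h 0] by blast
  then show ?thesis unfolding h(1) by blast
qed

lemma last_colour_cong:
  "fst \<sigma> = fst \<rho> \<Longrightarrow> (\<And>j. j < k \<Longrightarrow> snd \<sigma> j = snd \<rho> j) \<Longrightarrow> last_colour \<sigma> k = last_colour \<rho> k"
  by (simp add: last_colour_def)

lemma deadlocked_path_ctrace_unextendable: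
  assumes consistent: "consistent_colouring T C tau"
    and f: "is_path T s f" "f n = None" "\<forall>m<n. f m \<noteq> None"
    and dead: "\<forall>a t. (state_at s f n, a, t) \<notin> T"
  shows "\<not> (\<exists>\<rho> \<in> coloured_traces T C tau s. proper_prefix (ctrace C tau s f) \<rho>)"
proof
  assume "\<exists>\<rho> \<in> coloured_traces T C tau s. proper_prefix (ctrace C tau s f) \<rho>"
  then obtain g where g: "is_path T s g" "proper_prefix (ctrace C tau s f) (ctrace C tau s g)"
    unfolding coloured_traces_def by blast
  let ?\<sigma> = "ctrace C tau s f" and ?\<rho> = "ctrace C tau s g" and ?k = "rank (kept C tau s f) n"
  have prefix: "snd ?\<sigma> j = snd ?\<rho> j" if "snd ?\<sigma> j \<noteq> None" for j
    using g(2) that unfolding proper_prefix_def by blast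
  have \<sigma>_defined: "snd ?\<sigma> j \<noteq> None \<longleftrightarrow> j < ?k" for j
    using ctrace_defined_iff_below_end[of f n] f(1,2) unfolding is_path_def by blast
  have "snd ?\<sigma> \<noteq> snd ?\<rho>" using g(2) unfolding proper_prefix_def by (simp add: prod_eq_iff)
  then obtain j where j: "snd ?\<sigma> j \<noteq> snd ?\<rho> j" by auto
  then have "snd ?\<sigma> j = None" using prefix by blast
  then have "?k \<le> j" "snd ?\<rho> j \<noteq> None" using \<sigma>_defined[of j] j by auto
  then obtain p where p: "kept C tau s g p" "rank (kept C tau s g) p = j"
    unfolding ctrace_defined_iff by blast
  then have "?k < rank (kept C tau s g) (Suc p)" using \<open>?k \<le> j\<close> by (simp add: rank_Suc)
  then obtain q where q: "kept C tau s g q" "rank (kept C tau s g) q = ?k"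
    using rank_attained by blast
  have g_before_q: "\<forall>m<q. g m \<noteq> None"
    using g(1) kept_Some[OF q(1)] wf_seq_Some_before[of g q] unfolding is_path_def by blast
  have "C (state_at s g q) = last_colour ?\<rho> ?k"
    using colour_state_at[OF g_before_q, where C = C and tau = tau and s = s] q(2) by simp
  also have "\<dots> = last_colour ?\<sigma> ?k"
    using last_colour_cong[of ?\<sigma> ?\<rho> ?k] prefix \<sigma>_defined by simp
  also have "\<dots> = C (state_at s f n)"
    using colour_state_at[OF f(3), where C = C and tau = tau and s = s] by simp
  finally have "coloured_traces T C tau (state_at s g q) = coloured_traces T C tau (state_at s f n)"
    using consistent unfolding consistent_colouring_def by blast
  moreover have "ctrace C tau (state_at s g q) (\<lambda>m. g (q + m)) \<in> coloured_traces T C tau (state_at s g q)"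
    using is_path_suffix[OF g(1)] unfolding coloured_traces_def by blast
  ultimately have "snd (ctrace C tau (state_at s g q) (\<lambda>m. g (q + m))) 0 = None"
    using coloured_traces_deadlock[OF dead] by blast
  moreover have "kept C tau (state_at s g q) (\<lambda>m. g (q + m)) 0"
    using q(1) by (simp add: kept_def)
  ultimately show False
    using ctrace_defined_iff[of C tau "state_at s g q" "\<lambda>m. g (q + m)" 0] by auto
qed

definition some_step :: "('s \<times> 'a \<times> 's) set \<Rightarrow> 's \<Rightarrow> ('a \<times> 's) option" where
  "some_step T v = (if \<exists>a t. (v, a, t) \<in> T then Some (SOME (a, t). (v, a, t) \<in> T) else None)"

lemma some_step_Some:
  assumes "some_step T v = Some (a, t)"
  shows "(v, a, t) \<in> T"
proof -
  have ex: "\<exists>a t. (v, a, t) \<in> T" and choice: "(SOME (a, t). (v, a, t) \<in> T) = (a, t)"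
    using assms unfolding some_step_def by (auto split: if_splits)
  have "case SOME (a, t). (v, a, t) \<in> T of (a, t) \<Rightarrow> (v, a, t) \<in> T"
    by (rule someI_ex) (use ex in auto)
  then show ?thesis unfolding choice by simp
qed

lemma some_step_None: "some_step T v = None \<longleftrightarrow> (\<forall>a t. (v, a, t) \<notin> T)"
  unfolding some_step_def by auto

primrec greedy_path :: "('s \<times> 'a \<times> 's) set \<Rightarrow> 's \<Rightarrow> nat \<Rightarrow> ('a \<times> 's) option" where
  "greedy_path T u 0 = some_step T u"
| "greedy_path T u (Suc m) = Option.bind (greedy_path T u m) (\<lambda>(a, t). some_step T t)"

lemma greedy_path_Suc_state:
  assumes "greedy_path T u m \<noteq> None"
  shows "greedy_path T u (Suc m) = some_step T (state_at u (greedy_path T u) (Suc m))"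
  using assms by auto

lemma is_maximal_path_greedy_path: "is_maximal_path T u (greedy_path T u)"
proof -
  let ?g = "greedy_path T u"
  have from_state: "?g m = some_step T (state_at u ?g m)" if "\<forall>k<m. ?g k \<noteq> None" for m
    using that by (cases m) (auto simp: greedy_path_Suc_state)
  have "wf_seq ?g" unfolding wf_seq_def by simp
  moreover have "(state_at u ?g m, a, t) \<in> T" if "?g m = Some (a, t)" for m a t
  proof -
    have "\<forall>k<m. ?g k \<noteq> None"
      using that \<open>wf_seq ?g\<close> wf_seq_Some_before[of ?g m] by simp
    then show ?thesis using that from_state[of m] some_step_Some by metis
  qed
  moreover have "\<forall>a t. (state_at u ?g n, a, t) \<notin> T" if "?g n = None" "\<forall>k<n. ?g k \<noteq> None" for n
    using that from_state[of n] some_step_None by metis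
  ultimately show ?thesis
    unfolding is_maximal_path_def is_path_def using finite_seq_first_None by blast
qed

definition append_seq :: "nat \<Rightarrow> (nat \<Rightarrow> 'b option) \<Rightarrow> (nat \<Rightarrow> 'b option) \<Rightarrow> nat \<Rightarrow> 'b option" where
  "append_seq n f h m = (if m < n then f m else h (m - n))"

lemma state_at_append_seq:
  "n \<le> m \<Longrightarrow> state_at s (append_seq n f h) m = state_at (state_at s f n) h (m - n)"
proof (induction m rule: dec_induct)
  case base
  have "state_at s (append_seq n f h) n = state_at s f n"
    by (rule state_at_cong) (simp add: append_seq_def)
  then show ?case by simp
next
  case (step m)
  then show ?case by (simp add: append_seq_def Suc_diff_le)
qed

lemma is_maximal_path_append_seq:
  assumes f: "is_path T s f" "\<forall>m<n. f m \<noteq> None"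
    and h: "is_maximal_path T (state_at s f n) h"
  shows "is_maximal_path T s (append_seq n f h)"
proof -
  let ?g = "append_seq n f h"
  have g_below: "?g m = f m" "state_at s ?g m = state_at s f m" if "m < n" for m
  proof -
    show "?g m = f m" using that by (simp add: append_seq_def)
    show "state_at s ?g m = state_at s f m" using that by (intro state_at_cong) (simp add: append_seq_def)
  qed
  have g_above: "?g (n + k) = h k" "state_at s ?g (n + k) = state_at (state_at s f n) h k" for k
    by (simp_all add: append_seq_def state_at_append_seq)
  have split: "m < n \<or> (\<exists>k. m = n + k)" for m by presburger
  have h_path: "is_path T (state_at s f n) h" using h unfolding is_maximal_path_def by blast
  have g_None: "\<exists>k. m = n + k \<and> h k = None" if "?g m = None" for m
    using split[of m] that f(2) g_below(1) g_above(1) by force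
  have "wf_seq ?g"
    unfolding wf_seq_def
  proof (intro allI impI)
    fix m assume "?g m = None"
    then obtain k where "m = n + k" "h k = None" using g_None by blast
    then show "?g (Suc m) = None"
      using h_path g_above(1)[of "Suc k"] unfolding is_path_def wf_seq_def by simp
  qed
  moreover have "(state_at s ?g m, a, t) \<in> T" if "?g m = Some (a, t)" for m a t
  proof (cases "m < n")
    case True
    then show ?thesis using that f(1) g_below unfolding is_path_def by simp
  next
    case False
    then obtain k where "m = n + k" using split by blast
    then show ?thesis using that h_path g_above unfolding is_path_def by simp
  qed
  moreover have "\<not> finite_seq ?g \<or>
      (\<exists>N. ?g N = None \<and> (\<forall>m<N. ?g m \<noteq> None) \<and> (\<forall>a t. (state_at s ?g N, a, t) \<notin> T))"
  proof (cases "finite_seq h")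
    case False
    then show ?thesis unfolding finite_seq_def using g_None by blast
  next
    case True
    then obtain k where k: "h k = None" "\<forall>m<k. h m \<noteq> None"
      "\<forall>a t. (state_at (state_at s f n) h k, a, t) \<notin> T"
      using h unfolding is_maximal_path_def finite_seq_def by blast
    have "?g m \<noteq> None" if "m < n + k" for m
      using split[of m] that k(2) f(2) g_below(1) g_above(1) by force
    then have "?g (n + k) = None \<and> (\<forall>m<n + k. ?g m \<noteq> None) \<and>
        (\<forall>a t. (state_at s ?g (n + k), a, t) \<notin> T)"
      using k g_above by (simp del: not_None_eq)
    then show ?thesis by blast
  qed
  ultimately show ?thesis unfolding is_maximal_path_def is_path_def by blast
qed

lemma unextendable_ctrace_complete:
  assumes f: "is_path T s f" "finite_seq f"
    and unextendable: "\<not> (\<exists>\<rho> \<in> coloured_traces T C tau s. proper_prefix (ctrace C tau s f) \<rho>)"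
  shows "ctrace C tau s f \<in> complete_coloured_traces T C tau s"
proof -
  obtain n where n: "f n = None" "\<forall>m<n. f m \<noteq> None" using finite_seq_first_None[OF f(2)] by blast
  define g where "g = append_seq n f (greedy_path T (state_at s f n))"
  have g_maximal: "is_maximal_path T s g"
    unfolding g_def using f(1) n(2) is_maximal_path_greedy_path by (rule is_maximal_path_append_seq)
  have "truncate_seq n g = truncate_seq n f"
    by (simp add: g_def fun_eq_iff append_seq_def truncate_seq_def)
  also have "\<dots> = f" using truncate_beyond_None f(1) n(1) unfolding is_path_def by blast
  finally have f_eq: "truncate_seq n g = f" .
  have "\<not> kept C tau s g m" if "n \<le> m" for m
  proof
    assume kept: "kept C tau s g m"
    let ?h = "truncate_seq (Suc m) g"
    have "is_path T s ?h"
      using g_maximal is_path_truncate[of T s g] unfolding is_maximal_path_def by blast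
    moreover have "proper_prefix (ctrace C tau s (truncate_seq n ?h)) (ctrace C tau s ?h)"
      using kept that by (intro ctrace_truncate_proper_prefix) (simp_all add: kept_truncate)
    moreover have "truncate_seq n ?h = f" using that f_eq by (simp add: truncate_truncate)
    ultimately show False using unextendable unfolding coloured_traces_def by blast
  qed
  then have "ctrace C tau s g = ctrace C tau s f" using ctrace_truncate[of n C tau s g] f_eq by simp
  then show ?thesis using g_maximal unfolding complete_coloured_traces_def by (metis (mono_tags) CollectI)
qed

lemma infinite_path_ctrace_complete:
  "is_path T s f \<Longrightarrow> \<not> finite_seq f \<Longrightarrow> ctrace C tau s f \<in> complete_coloured_traces T C tau s"
  unfolding complete_coloured_traces_def is_maximal_path_def by blast

theorem lemma3p7:
  fixes T :: "('s \<times> 'a \<times> 's) set" and C :: "'s \<Rightarrow> 'c" and tau :: 'a and s :: 's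
    and \<sigma> :: "'c \<times> (nat \<Rightarrow> ('a \<times> 'c) option)"
  assumes "consistent_colouring T C tau"
  shows "\<sigma> \<in> complete_coloured_traces T C tau s \<longleftrightarrow>
           (\<sigma> \<in> coloured_traces T C tau s \<and> \<not> finite_seq (snd \<sigma>))
         \<or> \<sigma> \<in> divergent_coloured_traces T C tau s
         \<or> (\<sigma> \<in> coloured_traces T C tau s \<and>
              \<not> (\<exists>\<rho> \<in> coloured_traces T C tau s. proper_prefix \<sigma> \<rho>))"
    (is "_ \<longleftrightarrow> ?infinite \<or> ?divergent \<or> ?unextendable")
proof
  assume "\<sigma> \<in> complete_coloured_traces T C tau s"
  then obtain f where \<sigma>: "\<sigma> = ctrace C tau s f" and f: "is_maximal_path T s f"
    unfolding complete_coloured_traces_def by blast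
  then have path: "is_path T s f" and trace: "\<sigma> \<in> coloured_traces T C tau s"
    unfolding is_maximal_path_def coloured_traces_def by blast+
  from f consider "\<not> finite_seq f"
    | n where "f n = None" "\<forall>m<n. f m \<noteq> None" "\<forall>a t. (state_at s f n, a, t) \<notin> T"
    unfolding is_maximal_path_def by blast
  then show "?infinite \<or> ?divergent \<or> ?unextendable"
  proof cases
    case 1
    then show ?thesis using path trace \<sigma> unfolding divergent_coloured_traces_def by blast
  next
    case 2
    then show ?thesis using deadlocked_path_ctrace_unextendable[OF assms path] trace \<sigma> by blast
  qed
next
  assume "?infinite \<or> ?divergent \<or> ?unextendable"
  then consider "?infinite" | "?divergent" | "?unextendable" by blast
  then show "\<sigma> \<in> complete_coloured_traces T C tau s"
  proof cases
    case 1
    then obtain f where "\<sigma> = ctrace C tau s f" "is_path T s f"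
      unfolding coloured_traces_def by blast
    then show ?thesis using 1 finite_seq_ctrace infinite_path_ctrace_complete by metis
  next
    case 2
    then obtain f where "\<sigma> = ctrace C tau s f" "is_path T s f" "\<not> finite_seq f"
      unfolding divergent_coloured_traces_def by blast
    then show ?thesis using infinite_path_ctrace_complete[of T s f C tau] by simp
  next
    case 3
    then obtain f where "\<sigma> = ctrace C tau s f" "is_path T s f"
      unfolding coloured_traces_def by blast
    then show ?thesis
      using 3 infinite_path_ctrace_complete unextendable_ctrace_complete by metis
  qed
qed

end
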